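(* Let $G$ be a locally compact group acting properly on a space $X$, and let $Y$ be any $G$-space. Let $S$ be a closed small subset of $X$ and let $f:S\to Y$ be a continuous map such that whenever $s\in S$ and $g\in G$ satisfy $gs\in S$, one has $f(gs)=gf(s)$. Then $f$ extends uniquely to a continuous equivariant map $F:G(S)\to Y$ (i.e. $F(gx)=gF(x)$ for all $g\in G$, $x\in G(S)$).
   Context: All spaces are completely regular Hausdorff. A $G$-space is a space $X$ with a continuous action $G\times X\to X$, $(g,x)\mapsto gx$, with $ex=x$ and $(gh)x=g(hx)$. For $S\subset X$, $G(S)=\{gs\mid g\in G,s\in S\}$. For $U,V\subset X$ the transporter is $\langle U,V\rangle=\{g\in G\mid gU\cap V\neq\emptyset\}$; $U$ and $V$ are thin relative to each other if $\langle U,V\rangle$ has compact closure in $G$. A subset $U\subset X$ is small if every point of $X$ has a neighborhood thin relative to $U$. For $G$ locally compact, a $G$-space $X$ is proper (the action is proper) if every point of $X$ has a small neighborhood. *)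

theory Defs
  imports "HOL-Analysis.Analysis" "HOL-Algebra.Group"
begin

definition crH_space :: "'a topology \<Rightarrow> bool" where
  "crH_space T \<longleftrightarrow> completely_regular_space T \<and> Hausdorff_space T"

definition topological_group :: "('g, 'm) monoid_scheme \<Rightarrow> 'g topology \<Rightarrow> bool" where
  "topological_group G T \<longleftrightarrow> group G \<and> topspace T = carrier G \<and>
     continuous_map (prod_topology T T) T (\<lambda>(a, b). a \<otimes>\<^bsub>G\<^esub> b) \<and>
     continuous_map T T (\<lambda>a. inv\<^bsub>G\<^esub> a)"

definition G_space :: "('g, 'm) monoid_scheme \<Rightarrow> 'g topology \<Rightarrow> 'x topology \<Rightarrow> ('g \<Rightarrow> 'x \<Rightarrow> 'x) \<Rightarrow> bool" where
  "G_space G TG TX act \<longleftrightarrow>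
     continuous_map (prod_topology TG TX) TX (\<lambda>(g, x). act g x) \<and>
     (\<forall>x\<in>topspace TX. act \<one>\<^bsub>G\<^esub> x = x) \<and>
     (\<forall>g\<in>carrier G. \<forall>h\<in>carrier G. \<forall>x\<in>topspace TX. act (g \<otimes>\<^bsub>G\<^esub> h) x = act g (act h x))"

definition orbit_set :: "('g, 'm) monoid_scheme \<Rightarrow> ('g \<Rightarrow> 'x \<Rightarrow> 'x) \<Rightarrow> 'x set \<Rightarrow> 'x set" where
  "orbit_set G act S = {act g s | g s. g \<in> carrier G \<and> s \<in> S}"

definition transporter :: "('g, 'm) monoid_scheme \<Rightarrow> ('g \<Rightarrow> 'x \<Rightarrow> 'x) \<Rightarrow> 'x set \<Rightarrow> 'x set \<Rightarrow> 'g set" where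
  "transporter G act U V = {g \<in> carrier G. act g ` U \<inter> V \<noteq> {}}"

definition thin_rel :: "('g, 'm) monoid_scheme \<Rightarrow> 'g topology \<Rightarrow> ('g \<Rightarrow> 'x \<Rightarrow> 'x) \<Rightarrow> 'x set \<Rightarrow> 'x set \<Rightarrow> bool" where
  "thin_rel G TG act U V \<longleftrightarrow> compactin TG (TG closure_of (transporter G act U V))"

definition nbhd :: "'x topology \<Rightarrow> 'x \<Rightarrow> 'x set \<Rightarrow> bool" where
  "nbhd TX x N \<longleftrightarrow> N \<subseteq> topspace TX \<and> (\<exists>W. openin TX W \<and> x \<in> W \<and> W \<subseteq> N)"

definition small_set :: "('g, 'm) monoid_scheme \<Rightarrow> 'g topology \<Rightarrow> 'x topology \<Rightarrow> ('g \<Rightarrow> 'x \<Rightarrow> 'x) \<Rightarrow> 'x set \<Rightarrow> bool" where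
  "small_set G TG TX act U \<longleftrightarrow> (\<forall>x\<in>topspace TX. \<exists>N. nbhd TX x N \<and> thin_rel G TG act N U)"

definition proper_action :: "('g, 'm) monoid_scheme \<Rightarrow> 'g topology \<Rightarrow> 'x topology \<Rightarrow> ('g \<Rightarrow> 'x \<Rightarrow> 'x) \<Rightarrow> bool" where
  "proper_action G TG TX act \<longleftrightarrow> (\<forall>x\<in>topspace TX. \<exists>N. nbhd TX x N \<and> small_set G TG TX act N)"

end

theory Submission
  imports Defs
begin

text \<open>The extension is forced: a point \<open>y\<close> of \<open>G(S)\<close> has some \<open>g\<close> with \<open>g y \<in> S\<close>, and
  equivariance demands \<open>F y = g\<inverse> f (g y)\<close>; compatibility of \<open>f\<close> makes this independent of \<open>g\<close>.
  For continuity near a point \<open>x\<close>, take an open \<open>W \<ni> x\<close> thin relative to \<open>S\<close>. Then all the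
  relevant \<open>g\<close> for points of \<open>W\<close> lie in the compact closure \<open>K\<close> of the transporter, and \<open>F\<close>
  on \<open>W \<inter> G(S)\<close> is the map \<open>(g, y) \<mapsto> g\<inverse> f (g y)\<close> on the closed set
  \<open>{(g, y) \<in> K \<times> W. g y \<in> S}\<close> pushed down along the projection \<open>K \<times> W \<rightarrow> W\<close>, which is a
  closed map because \<open>K\<close> is compact.\<close>

lemma continuous_map_through_compact_projection:
  assumes "compact_space K" and P: "closedin (prod_topology K Z) P"
    and \<phi>: "continuous_map (subtopology (prod_topology K Z) P) Y \<phi>"
    and F: "\<And>p. p \<in> P \<Longrightarrow> F (snd p) = \<phi> p"
  shows "continuous_map (subtopology Z (snd ` P)) Y F"
  unfolding continuous_map_closedin
proof (intro conjI allI impI)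
  have PT: "P \<subseteq> topspace (prod_topology K Z)"
    using P closedin_subset by blast
  then have topP: "topspace (subtopology Z (snd ` P)) = snd ` P"
    by force
  show "F \<in> topspace (subtopology Z (snd ` P)) \<rightarrow> topspace Y"
    using \<phi> PT F unfolding topP by (force dest: continuous_map_image_subset_topspace)
  fix C assume "closedin Y C"
  then have "closedin (subtopology (prod_topology K Z) P) {p \<in> topspace (subtopology (prod_topology K Z) P). \<phi> p \<in> C}"
    using \<phi> closedin_continuous_map_preimage by blast
  then have "closedin (prod_topology K Z) {p \<in> P. \<phi> p \<in> C}"
    using P PT closedin_trans_full by (metis (no_types, lifting) Collect_cong inf.absorb2 topspace_subtopology)
  then have "closedin Z (snd ` {p \<in> P. \<phi> p \<in> C})"
    using closed_map_snd[OF \<open>compact_space K\<close>] closed_map_def by blast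
  moreover have "{y \<in> topspace (subtopology Z (snd ` P)). F y \<in> C} = snd ` {p \<in> P. \<phi> p \<in> C}"
    unfolding topP using F by force
  ultimately show "closedin (subtopology Z (snd ` P)) {y \<in> topspace (subtopology Z (snd ` P)). F y \<in> C}"
    by (simp add: closedin_subset_topspace image_mono)
qed

lemma G_space_act_in_topspace:
  assumes "G_space G TG TX act" "topspace TG = carrier G"
    and "g \<in> carrier G" "x \<in> topspace TX"
  shows "act g x \<in> topspace TX"
  using assms continuous_map_image_subset_topspace unfolding G_space_def by fastforce

lemma G_space_act_inv_act:
  assumes "group G" "G_space G TG TX act" "g \<in> carrier G" "x \<in> topspace TX"
  shows "act (inv\<^bsub>G\<^esub> g) (act g x) = x"
  using assms unfolding G_space_def by (metis group.inv_closed group.l_inv)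

lemma continuous_map_transport_back:
  assumes "topological_group G TG" "G_space G TG TX actX" "G_space G TG TY actY"
    and "continuous_map (subtopology TX S) TY f"
  shows "continuous_map
           (subtopology (prod_topology TG TX) {(g, y) \<in> topspace (prod_topology TG TX). actX g y \<in> S})
           TY (\<lambda>(g, y). actY (inv\<^bsub>G\<^esub> g) (f (actX g y)))"
proof -
  let ?P = "{(g, y) \<in> topspace (prod_topology TG TX). actX g y \<in> S}"
  have actX: "continuous_map (subtopology (prod_topology TG TX) ?P) (subtopology TX S) (\<lambda>(g, y). actX g y)"
    using assms(2) unfolding G_space_def
    by (auto intro: continuous_map_into_subtopology continuous_map_from_subtopology)
  have inv: "continuous_map (subtopology (prod_topology TG TX) ?P) TG (\<lambda>(g, y). inv\<^bsub>G\<^esub> g)"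
  proof -
    have "continuous_map TG TG (\<lambda>g. inv\<^bsub>G\<^esub> g)"
      using assms(1) unfolding topological_group_def by blast
    then show ?thesis
      using continuous_map_compose[OF continuous_map_fst]
      by (force simp: case_prod_unfold o_def intro: continuous_map_from_subtopology)
  qed
  have "continuous_map (subtopology (prod_topology TG TX) ?P) (prod_topology TG TY)
          (\<lambda>(g, y). (inv\<^bsub>G\<^esub> g, f (actX g y)))"
    using continuous_map_pairedI[OF inv continuous_map_compose[OF actX assms(4)]]
    by (simp add: case_prod_unfold o_def)
  then show ?thesis
    using continuous_map_compose assms(3) unfolding G_space_def
    by (fastforce simp: case_prod_unfold o_def)
qed

definition equivariant_extension ::
    "('g, 'm) monoid_scheme \<Rightarrow> ('g \<Rightarrow> 'x \<Rightarrow> 'x) \<Rightarrow> ('g \<Rightarrow> 'y \<Rightarrow> 'y) \<Rightarrow> 'x set \<Rightarrow> ('x \<Rightarrow> 'y) \<Rightarrow> 'x \<Rightarrow> 'y"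
  where "equivariant_extension G actX actY S f y =
    (let g = SOME g. g \<in> carrier G \<and> actX g y \<in> S in actY (inv\<^bsub>G\<^esub> g) (f (actX g y)))"

locale compatible_map =
  fixes G :: "('g, 'm) monoid_scheme" (structure) and TG :: "'g topology"
    and TX :: "'x topology" and actX :: "'g \<Rightarrow> 'x \<Rightarrow> 'x"
    and TY :: "'y topology" and actY :: "'g \<Rightarrow> 'y \<Rightarrow> 'y"
    and S :: "'x set" and f :: "'x \<Rightarrow> 'y"
  assumes topological_group: "topological_group G TG"
    and G_space_X: "G_space G TG TX actX" and G_space_Y: "G_space G TG TY actY"
    and S_subset: "S \<subseteq> topspace TX" and f_in: "\<And>s. s \<in> S \<Longrightarrow> f s \<in> topspace TY"
    and compatible: "\<And>s g. s \<in> S \<Longrightarrow> g \<in> carrier G \<Longrightarrow> actX g s \<in> S \<Longrightarrow> f (actX g s) = actY g (f s)"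
begin

sublocale group G
  using topological_group unfolding topological_group_def by blast

lemma topspace_TG: "topspace TG = carrier G"
  using topological_group unfolding topological_group_def by blast

lemma actX_one: "x \<in> topspace TX \<Longrightarrow> actX \<one> x = x"
  and actX_mult: "g \<in> carrier G \<Longrightarrow> h \<in> carrier G \<Longrightarrow> x \<in> topspace TX \<Longrightarrow> actX (g \<otimes> h) x = actX g (actX h x)"
  and actY_one: "y \<in> topspace TY \<Longrightarrow> actY \<one> y = y"
  and actY_mult: "g \<in> carrier G \<Longrightarrow> h \<in> carrier G \<Longrightarrow> y \<in> topspace TY \<Longrightarrow> actY (g \<otimes> h) y = actY g (actY h y)"
  using G_space_X G_space_Y unfolding G_space_def by auto

lemma actX_in: "g \<in> carrier G \<Longrightarrow> x \<in> topspace TX \<Longrightarrow> actX g x \<in> topspace TX"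
  and actY_in: "g \<in> carrier G \<Longrightarrow> y \<in> topspace TY \<Longrightarrow> actY g y \<in> topspace TY"
  by (simp_all add: G_space_act_in_topspace[OF G_space_X topspace_TG]
      G_space_act_in_topspace[OF G_space_Y topspace_TG])

lemma actX_inv_act: "g \<in> carrier G \<Longrightarrow> x \<in> topspace TX \<Longrightarrow> actX (inv g) (actX g x) = x"
  and actY_inv_act: "g \<in> carrier G \<Longrightarrow> y \<in> topspace TY \<Longrightarrow> actY (inv g) (actY g y) = y"
  by (simp_all add: G_space_act_inv_act[OF is_group G_space_X] G_space_act_inv_act[OF is_group G_space_Y])

lemma orbit_set_iff:
  "y \<in> orbit_set G actX S \<longleftrightarrow> y \<in> topspace TX \<and> (\<exists>h \<in> carrier G. actX h y \<in> S)"
proof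
  assume "y \<in> orbit_set G actX S"
  then obtain g s where g: "g \<in> carrier G" and s: "s \<in> S" "s \<in> topspace TX" and y: "y = actX g s"
    using S_subset unfolding orbit_set_def by blast
  then have "actX (inv g) y \<in> S"
    using actX_inv_act by simp
  then show "y \<in> topspace TX \<and> (\<exists>h \<in> carrier G. actX h y \<in> S)"
    using actX_in g s y inv_closed by blast
next
  assume "y \<in> topspace TX \<and> (\<exists>h \<in> carrier G. actX h y \<in> S)"
  then obtain h where "y \<in> topspace TX" "h \<in> carrier G" "actX h y \<in> S" by blast
  then have "y = actX (inv h) (actX h y)"
    using actX_inv_act by simp
  then show "y \<in> orbit_set G actX S"
    unfolding orbit_set_def using \<open>h \<in> carrier G\<close> \<open>actX h y \<in> S\<close> inv_closed by blast
qed

lemma subset_orbit_set: "S \<subseteq> orbit_set G actX S"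
proof
  fix s assume "s \<in> S"
  then have "s \<in> topspace TX" "actX \<one> s \<in> S"
    using S_subset actX_one by auto
  then show "s \<in> orbit_set G actX S"
    using orbit_set_iff one_closed by blast
qed

lemma equivariant_extension_eq:
  assumes y: "y \<in> topspace TX" and h: "h \<in> carrier G" "actX h y \<in> S"
  shows "equivariant_extension G actX actY S f y = actY (inv h) (f (actX h y))"
proof -
  have transport: "actY (inv g) (f (actX g y)) = actY (inv h) (f (actX h y))"
    if g: "g \<in> carrier G" "actX g y \<in> S" for g
  proof -
    have "actX (h \<otimes> inv g) (actX g y) = actX h y"
      using g h y actX_mult actX_inv_act actX_in by simp
    then have "f (actX h y) = actY (h \<otimes> inv g) (f (actX g y))"
      using compatible[of "actX g y" "h \<otimes> inv g"] g h by simp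
    also have "\<dots> = actY h (actY (inv g) (f (actX g y)))"
      using actY_mult f_in g h by blast
    finally show ?thesis
      using actY_inv_act actY_in f_in g h by simp
  qed
  have "\<exists>g. g \<in> carrier G \<and> actX g y \<in> S"
    using h by blast
  then show ?thesis
    unfolding equivariant_extension_def Let_def by (rule someI2_ex) (use transport in blast)
qed

lemma equivariant_extension_extends: "s \<in> S \<Longrightarrow> equivariant_extension G actX actY S f s = f s"
  using equivariant_extension_eq[of s \<one>] S_subset f_in actX_one actY_one by (simp add: subsetD)

lemma equivariant_extension_equivariant:
  assumes g: "g \<in> carrier G" and x: "x \<in> orbit_set G actX S"
  shows "equivariant_extension G actX actY S f (actX g x) = actY g (equivariant_extension G actX actY S f x)"
proof -
  obtain h where h: "h \<in> carrier G" "actX h x \<in> S" and xT: "x \<in> topspace TX"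
    using x orbit_set_iff by blast
  have "actX (h \<otimes> inv g) (actX g x) = actX h x"
    using actX_mult actX_inv_act actX_in g h xT by simp
  then have "equivariant_extension G actX actY S f (actX g x) = actY (inv (h \<otimes> inv g)) (f (actX h x))"
    using equivariant_extension_eq[of "actX g x" "h \<otimes> inv g"] actX_in g h xT by simp
  also have "\<dots> = actY g (actY (inv h) (f (actX h x)))"
    using g h f_in actY_mult by (simp add: inv_mult_group)
  finally show ?thesis
    using equivariant_extension_eq h xT by simp
qed

lemma equivariant_maps_eq_on_orbit_set:
  assumes "\<And>s. s \<in> S \<Longrightarrow> F s = F' s"
    and "\<And>g x. g \<in> carrier G \<Longrightarrow> x \<in> orbit_set G actX S \<Longrightarrow> F (actX g x) = actY g (F x)"
    and "\<And>g x. g \<in> carrier G \<Longrightarrow> x \<in> orbit_set G actX S \<Longrightarrow> F' (actX g x) = actY g (F' x)"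
    and "x \<in> orbit_set G actX S"
  shows "F x = F' x"
proof -
  obtain g s where g: "g \<in> carrier G" and s: "s \<in> S" and x: "x = actX g s"
    using assms(4) unfolding orbit_set_def by blast
  then have "s \<in> orbit_set G actX S"
    using subset_orbit_set by blast
  then show ?thesis
    using assms(1-3) g s x by simp
qed


lemma continuous_map_equivariant_extension_on_thin_nbhd:
  assumes f: "continuous_map (subtopology TX S) TY f" and S: "closedin TX S"
    and thin: "thin_rel G TG actX N S" and W: "openin TX W" "W \<subseteq> N"
  shows "continuous_map (subtopology TX (W \<inter> orbit_set G actX S)) TY
           (equivariant_extension G actX actY S f)"
proof -
  define K where "K = TG closure_of transporter G actX N S"
  have K_compact: "compact_space (subtopology TG K)"
    using thin compact_space_subtopology unfolding thin_rel_def K_def by blast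
  have K_carrier: "K \<subseteq> carrier G"
    unfolding K_def topspace_TG[symmetric] by (rule closure_of_subset_topspace)
  have transporter_K: "h \<in> K" if "h \<in> carrier G" "y \<in> W" "actX h y \<in> S" for h y
  proof -
    have "h \<in> transporter G actX N S"
      unfolding transporter_def using that W(2) by blast
    then show ?thesis
      unfolding K_def using closure_of_subset topspace_TG transporter_def
      by (metis (no_types, lifting) mem_Collect_eq subsetD subsetI)
  qed
  have W_sub: "W \<subseteq> topspace TX"
    using W(1) openin_subset by blast
  define P where "P = {(h, y) \<in> K \<times> W. actX h y \<in> S}"
  let ?Z = "prod_topology (subtopology TG K) (subtopology TX W)"
  have Z_eq: "?Z = subtopology (prod_topology TG TX) (K \<times> W)"
    by (simp add: subtopology_Times)
  have top_Z: "topspace ?Z = K \<times> W"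
    using K_carrier W_sub topspace_TG by auto
  have act_cont: "continuous_map ?Z TX (\<lambda>(h, y). actX h y)"
    unfolding Z_eq using G_space_X unfolding G_space_def by (blast intro: continuous_map_from_subtopology)
  have P_eq: "P = {p \<in> topspace ?Z. (\<lambda>(h, y). actX h y) p \<in> S}"
    using top_Z unfolding P_def by auto
  have P_closed: "closedin ?Z P"
    unfolding P_eq by (rule closedin_continuous_map_preimage[OF act_cont S])
  have "subtopology ?Z P = subtopology (prod_topology TG TX) P"
    unfolding Z_eq subtopology_subtopology P_def by (metis (no_types, lifting) Int_absorb1 case_prodE mem_Collect_eq subsetI)
  moreover have "P \<subseteq> {(g, y) \<in> topspace (prod_topology TG TX). actX g y \<in> S}"
    using K_carrier W_sub topspace_TG unfolding P_def by auto
  ultimately have \<phi>_cont: "continuous_map (subtopology ?Z P) TY (\<lambda>(h, y). actY (inv h) (f (actX h y)))"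
    using continuous_map_from_subtopology_mono[OF continuous_map_transport_back[OF topological_group G_space_X G_space_Y f]]
    by simp
  have snd_P: "snd ` P = W \<inter> orbit_set G actX S"
  proof
    show "snd ` P \<subseteq> W \<inter> orbit_set G actX S"
      using K_carrier W_sub unfolding P_def by (auto simp: orbit_set_iff subset_iff)
    show "W \<inter> orbit_set G actX S \<subseteq> snd ` P"
    proof
      fix y assume y: "y \<in> W \<inter> orbit_set G actX S"
      then obtain h where "h \<in> carrier G" "actX h y \<in> S"
        using orbit_set_iff by blast
      then have "(h, y) \<in> P"
        using y transporter_K unfolding P_def by blast
      then show "y \<in> snd ` P"
        by force
    qed
  qed
  have "equivariant_extension G actX actY S f (snd p) = (\<lambda>(h, y). actY (inv h) (f (actX h y))) p"
    if "p \<in> P" for p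
  proof -
    obtain h y where p: "p = (h, y)"
      by (cases p)
    then have "h \<in> K" "y \<in> W" "actX h y \<in> S"
      using that unfolding P_def by auto
    then show ?thesis
      using p K_carrier W_sub equivariant_extension_eq by (simp add: subsetD)
  qed
  then have "continuous_map (subtopology (subtopology TX W) (snd ` P)) TY (equivariant_extension G actX actY S f)"
    by (rule continuous_map_through_compact_projection[OF K_compact P_closed \<phi>_cont])
  then show ?thesis
    by (simp add: subtopology_subtopology snd_P)
qed

lemma continuous_map_equivariant_extension:
  assumes "continuous_map (subtopology TX S) TY f" and "closedin TX S"
    and small: "small_set G TG TX actX S"
  shows "continuous_map (subtopology TX (orbit_set G actX S)) TY (equivariant_extension G actX actY S f)"
proof (rule pasting_lemma)
  let ?O = "orbit_set G actX S"
  let ?I = "{W. openin TX W \<and> continuous_map (subtopology TX (W \<inter> ?O)) TY (equivariant_extension G actX actY S f)}"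
  show "openin (subtopology TX ?O) (W \<inter> ?O)" if "W \<in> ?I" for W
    using that openin_subtopology by blast
  show "continuous_map (subtopology (subtopology TX ?O) (W \<inter> ?O)) TY (equivariant_extension G actX actY S f)"
    if "W \<in> ?I" for W
  proof -
    have "?O \<inter> (W \<inter> ?O) = W \<inter> ?O"
      by blast
    then show ?thesis
      using that by (simp add: subtopology_subtopology)
  qed
  show "\<exists>W. W \<in> ?I \<and> x \<in> W \<inter> ?O \<and> equivariant_extension G actX actY S f x = equivariant_extension G actX actY S f x"
    if "x \<in> topspace (subtopology TX ?O)" for x
  proof -
    have "x \<in> topspace TX"
      using that by simp
    then obtain N W where "thin_rel G TG actX N S" "openin TX W" "x \<in> W" "W \<subseteq> N"
      using small unfolding small_set_def nbhd_def by blast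
    then have "W \<in> ?I"
      using continuous_map_equivariant_extension_on_thin_nbhd assms by blast
    then show ?thesis
      using \<open>x \<in> W\<close> that by auto
  qed
qed auto

end

theorem theorem4p1:
  fixes G :: "('g, 'm) monoid_scheme" and TG :: "'g topology"
    and TX :: "'x topology" and actX :: "'g \<Rightarrow> 'x \<Rightarrow> 'x"
    and TY :: "'y topology" and actY :: "'g \<Rightarrow> 'y \<Rightarrow> 'y"
    and S :: "'x set" and f :: "'x \<Rightarrow> 'y"
  assumes "topological_group G TG" and "crH_space TG" and "locally_compact_space TG"
    and "crH_space TX" and "G_space G TG TX actX" and "proper_action G TG TX actX"
    and "crH_space TY" and "G_space G TG TY actY"
    and "closedin TX S" and "small_set G TG TX actX S"
    and "continuous_map (subtopology TX S) TY f"
    and "\<And>s g. s \<in> S \<Longrightarrow> g \<in> carrier G \<Longrightarrow> actX g s \<in> S \<Longrightarrow> f (actX g s) = actY g (f s)"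
  shows "\<exists>F. continuous_map (subtopology TX (orbit_set G actX S)) TY F
           \<and> (\<forall>s\<in>S. F s = f s)
           \<and> (\<forall>g\<in>carrier G. \<forall>x\<in>orbit_set G actX S. F (actX g x) = actY g (F x))
           \<and> (\<forall>F'. continuous_map (subtopology TX (orbit_set G actX S)) TY F'
                 \<and> (\<forall>s\<in>S. F' s = f s)
                 \<and> (\<forall>g\<in>carrier G. \<forall>x\<in>orbit_set G actX S. F' (actX g x) = actY g (F' x))
                 \<longrightarrow> (\<forall>x\<in>orbit_set G actX S. F' x = F x))"
proof -
  have S_subset: "S \<subseteq> topspace TX"
    using assms(9) closedin_subset by blast
  have f_in: "f s \<in> topspace TY" if "s \<in> S" for s
    using assms(11) that S_subset continuous_map_image_subset_topspace by fastforce
  interpret compatible_map G TG TX actX TY actY S f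
    using assms(1,5,8,12) S_subset f_in by unfold_locales
  let ?F = "equivariant_extension G actX actY S f"
  show ?thesis
  proof (intro exI conjI allI impI ballI)
    show "continuous_map (subtopology TX (orbit_set G actX S)) TY ?F"
      using continuous_map_equivariant_extension assms(9-11) by blast
    show "?F s = f s" if "s \<in> S" for s
      using equivariant_extension_extends that by blast
    show "?F (actX g x) = actY g (?F x)" if "g \<in> carrier G" "x \<in> orbit_set G actX S" for g x
      using equivariant_extension_equivariant that by blast
    show "F' x = ?F x"
      if "continuous_map (subtopology TX (orbit_set G actX S)) TY F' \<and> (\<forall>s\<in>S. F' s = f s)
          \<and> (\<forall>g\<in>carrier G. \<forall>x\<in>orbit_set G actX S. F' (actX g x) = actY g (F' x))"
        and "x \<in> orbit_set G actX S" for F' x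
      using equivariant_maps_eq_on_orbit_set[of F' ?F] equivariant_extension_extends
        equivariant_extension_equivariant that by auto
  qed
qed

end
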